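(* In the setting described in the context, for every $\theta\in\Theta$ one has $H_\theta\le C_\Upsilon(\theta)$, with equality if and only if $\langle w_j'(\theta)|w_k(\theta)\rangle=0$ for all $j,k$ (including $j=k$) with $p_j(\theta)>0$ and $p_k(\theta)>0$.
   Context: Let $\Theta\subseteq\mathbb{R}$ be an open interval and $D\ge1$. For $\theta\in\Theta$ let $\Phi_\theta$ be a quantum channel on $D\times D$ complex matrices and $\rho_0=|\psi_0\rangle\langle\psi_0|$ a fixed pure input state. Canonical Kraus operators are $D\times D$ matrices $\Upsilon_1(\theta),\dots,\Upsilon_D(\theta)$, differentiable in $\theta$, with $\sum_k\Upsilon_k^\dagger\Upsilon_k=\mathbb{I}$, $\Phi_\theta(\rho)=\sum_k\Upsilon_k\rho\Upsilon_k^\dagger$, and $\mathrm{tr}\{\Upsilon_k\rho_0\Upsilon_j^\dagger\}=\delta_{jk}p_k(\theta)$. Write $\Upsilon_k(\theta)|\psi_0\rangle=\sqrt{p_k(\theta)}|w_k(\theta)\rangle$ with $\{|w_k(\theta)\rangle\}$ an orthonormal basis of $\mathbb{C}^D$ differentiable in $\theta$, so the output is $\rho_\theta=\sum_kp_k|w_k\rangle\langle w_k|$. Each $p_k$ is assumed either identically zero or strictly positive on $\Theta$. Primes denote $d/d\theta$. $C_\Upsilon(\theta)=4\sum_k\mathrm{tr}\{\Upsilon_k'\rho_0\Upsilon_k'^\dagger\}$. $H_\theta=\mathrm{tr}\{\rho_\theta\lambda^2\}$ is the SLD quantum information of $\rho_\theta$, $\lambda$ any Hermitian solution of $d\rho_\theta/d\theta=\frac12(\rho_\theta\lambda+\lambda\rho_\theta)$.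 *)

theory Defs
  imports "HOL-Analysis.Analysis"
begin

text \<open>Vectors in C^D are complex^'n, D x D complex matrices are complex^'n^'n,
  with D = CARD('n).\<close>

definition braket :: "complex ^ 'n \<Rightarrow> complex ^ 'n \<Rightarrow> complex" where
  "braket x y = (\<Sum>i\<in>UNIV. cnj (x $ i) * y $ i)"

definition ketbra :: "complex ^ 'n \<Rightarrow> complex ^ 'n \<Rightarrow> complex ^ 'n ^ 'n" where
  "ketbra x y = (\<chi> i j. x $ i * cnj (y $ j))"

definition dagger :: "complex ^ 'n ^ 'n \<Rightarrow> complex ^ 'n ^ 'n" where
  "dagger A = (\<chi> i j. cnj (A $ j $ i))"

definition mtr :: "complex ^ 'n ^ 'n \<Rightarrow> complex" where
  "mtr A = (\<Sum>i\<in>UNIV. A $ i $ i)"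

definition out_state :: "('n \<Rightarrow> real) \<Rightarrow> ('n \<Rightarrow> complex ^ 'n) \<Rightarrow> complex ^ 'n ^ 'n" where
  "out_state p w = (\<Sum>k\<in>UNIV. p k *\<^sub>R ketbra (w k) (w k))"

definition C_Ups :: "('n \<Rightarrow> complex ^ 'n ^ 'n) \<Rightarrow> complex ^ 'n ^ 'n \<Rightarrow> real" where
  "C_Ups dU rho0 = 4 * Re (\<Sum>k\<in>UNIV. mtr (dU k ** rho0 ** dagger (dU k)))"

text \<open>SLD quantum information tr(rho lambda^2) for a given SLD lambda (the trace is real).\<close>
definition sld_info :: "complex ^ 'n ^ 'n \<Rightarrow> complex ^ 'n ^ 'n \<Rightarrow> real" where
  "sld_info rho L = Re (mtr (rho ** (L ** L)))"

end

theory Submission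
  imports Defs
begin

text \<open>Expand everything in the eigenbasis \<open>w\<^sub>k\<close> of \<open>\<rho>\<^sub>\<theta>\<close> and write \<open>a\<^sub>k\<^sub>m = \<langle>w\<^sub>k|w\<^sub>m'\<rangle>\<close>, which is
  anti-Hermitian because the basis stays orthonormal. Differentiating \<open>\<rho>\<^sub>\<theta> = \<Sum> p\<^sub>k |w\<^sub>k\<rangle>\<langle>w\<^sub>k|\<close> turns the
  SLD equation into \<open>(p\<^sub>k + p\<^sub>m)/2 L\<^sub>k\<^sub>m = \<delta>\<^sub>k\<^sub>m p\<^sub>m' + (p\<^sub>m - p\<^sub>k) a\<^sub>k\<^sub>m\<close>, and differentiating
  \<open>\<Upsilon>\<^sub>m \<psi>\<^sub>0 = \<surd>p\<^sub>m w\<^sub>m\<close> gives \<open>\<langle>w\<^sub>k|\<Upsilon>\<^sub>m' \<psi>\<^sub>0\<rangle> = \<surd>p\<^sub>m a\<^sub>k\<^sub>m\<close> for \<open>k \<noteq> m\<close> and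
  \<open>|\<langle>w\<^sub>m|\<Upsilon>\<^sub>m' \<psi>\<^sub>0\<rangle>|\<^sup>2 = p\<^sub>m'\<^sup>2/(4 p\<^sub>m) + p\<^sub>m |a\<^sub>m\<^sub>m|\<^sup>2\<close>. Hence \<open>H = \<Sum> p\<^sub>m |L\<^sub>k\<^sub>m|\<^sup>2\<close> and
  \<open>C = 4 \<Sum> |\<langle>w\<^sub>k|\<Upsilon>\<^sub>m' \<psi>\<^sub>0\<rangle>|\<^sup>2\<close> can be compared term by term: as \<open>|p\<^sub>m - p\<^sub>k| \<le> p\<^sub>k + p\<^sub>m\<close>, strictly
  when both weights are positive, each term of \<open>H\<close> is at most the matching term of \<open>C\<close>, with
  equality exactly when \<open>a\<^sub>k\<^sub>m = 0\<close> or one of the two weights vanishes.\<close>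

lemma scaleR_complex: "r *\<^sub>R (z::complex) = of_real r * z"
  by (simp add: scaleR_conv_of_real)

lemma braket_zero_left [simp]: "braket 0 x = 0"
  by (simp add: braket_def)

lemma braket_zero_right [simp]: "braket x 0 = 0"
  by (simp add: braket_def)

lemma braket_add_right: "braket x (y + z) = braket x y + braket x z"
  by (simp add: braket_def algebra_simps sum.distrib)

lemma braket_add_left: "braket (x + y) z = braket x z + braket y z"
  by (simp add: braket_def algebra_simps sum.distrib)

lemma braket_scale_right: "braket x (c *s y) = c * braket x y"
  by (simp add: braket_def sum_distrib_left algebra_simps)

lemma braket_scale_left: "braket (c *s x) y = cnj c * braket x y"
  by (simp add: braket_def sum_distrib_left algebra_simps)

lemma braket_scaleR_right: "braket x (r *\<^sub>R y) = r *\<^sub>R braket x y"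
  by (simp add: braket_def scaleR_sum_right)

lemma braket_scaleR_left: "braket (r *\<^sub>R x) y = r *\<^sub>R braket x y"
  unfolding braket_def scaleR_sum_right by (rule sum.cong) (auto simp: scaleR_complex)

lemma cnj_braket: "cnj (braket x y) = braket y x"
  by (simp add: braket_def mult.commute)

lemma braket_sum_right: "braket x (\<Sum>k\<in>S. f k) = (\<Sum>k\<in>S. braket x (f k))"
  by (simp add: braket_def sum_distrib_left sum.swap[of _ S])

lemma bounded_bilinear_braket: "bounded_bilinear braket"
  unfolding bilinear_conv_bounded_bilinear[symmetric] bilinear_def
  by (auto intro!: linearI simp: braket_add_left braket_add_right braket_scaleR_left braket_scaleR_right)

lemma braket_dagger: "braket x (A *v y) = braket (dagger A *v x) y"
proof -
  have "braket x (A *v y) = (\<Sum>i\<in>UNIV. \<Sum>j\<in>UNIV. cnj (x $ i) * A $ i $ j * y $ j)"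
    by (simp add: braket_def matrix_vector_mult_def sum_distrib_left mult.assoc)
  also have "\<dots> = (\<Sum>j\<in>UNIV. \<Sum>i\<in>UNIV. cnj (x $ i) * A $ i $ j * y $ j)"
    by (rule sum.swap)
  also have "\<dots> = braket (dagger A *v x) y"
    by (simp add: braket_def dagger_def matrix_vector_mult_def sum_distrib_right sum_distrib_left
        mult.commute mult.left_commute)
  finally show ?thesis .
qed

lemma braket_hermitian: "dagger L = L \<Longrightarrow> braket (L *v x) y = braket x (L *v y)"
  by (metis braket_dagger)

definition orthonormal_basis :: "('n \<Rightarrow> complex ^ 'n) \<Rightarrow> bool" where
  "orthonormal_basis w \<longleftrightarrow> (\<forall>j k. braket (w j) (w k) = (if j = k then 1 else 0))"

lemma orthonormal_basis_expansion:
  fixes w :: "'n \<Rightarrow> complex ^ 'n"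
  assumes "orthonormal_basis w"
  shows "x = (\<Sum>k\<in>UNIV. braket (w k) x *s w k)"
proof -
  define W :: "complex^'n^'n" where "W = (\<chi> i k. w k $ i)"
  have "dagger W ** W = mat 1"
    using assms by (simp add: orthonormal_basis_def W_def dagger_def matrix_matrix_mult_def mat_def
        vec_eq_iff braket_def)
  \<comment> \<open>\<open>W\<close> is square, so its left inverse \<open>W\<^sup>\<dagger>\<close> is also a right inverse: the family spans.\<close>
  hence "W ** dagger W = mat 1" by (simp add: matrix_left_right_inverse)
  hence "x = W *v (dagger W *v x)" by (simp add: matrix_vector_mul_assoc)
  also have "\<dots> = (\<Sum>k\<in>UNIV. braket (w k) x *s w k)"
    by (simp add: W_def dagger_def matrix_vector_mult_def vec_eq_iff braket_def mult.commute)
  finally show ?thesis .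
qed

lemma braket_self_parseval:
  assumes "orthonormal_basis w"
  shows "braket x x = of_real (\<Sum>k\<in>UNIV. (cmod (braket (w k) x))\<^sup>2)"
proof -
  have cnj_mult_self: "cnj z * z = of_real ((cmod z)\<^sup>2)" for z
    by (metis complex_norm_square mult.commute)
  have "braket x x = (\<Sum>k\<in>UNIV. cnj (braket (w k) x) * braket (w k) x)"
    by (subst (2) orthonormal_basis_expansion[OF assms, of x])
      (simp add: braket_sum_right braket_scale_right mult.commute cnj_braket)
  also have "\<dots> = (\<Sum>k\<in>UNIV. of_real ((cmod (braket (w k) x))\<^sup>2))"
    by (simp only: cnj_mult_self)
  finally show ?thesis by simp
qed

lemma matrix_vector_mult_sum: "(\<Sum>k\<in>S. A k) *v v = (\<Sum>k\<in>S. A k *v v)"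
  by (simp add: matrix_vector_mult_def vec_eq_iff sum_distrib_right sum.swap[of _ S])

lemma matrix_vector_mult_scaleR: "(r *\<^sub>R A) *v v = r *\<^sub>R (A *v (v::complex^'n))"
  unfolding matrix_vector_mult_def by (simp add: vec_eq_iff scaleR_sum_right)

lemma ketbra_mult_vec: "ketbra x y *v v = braket y v *s x"
  by (simp add: ketbra_def braket_def matrix_vector_mult_def vec_eq_iff sum_distrib_left algebra_simps)

lemma out_state_mult_vec:
  "out_state p w *v v = (\<Sum>m\<in>UNIV. (of_real (p m) * braket (w m) v) *s w m)"
  unfolding out_state_def matrix_vector_mult_sum matrix_vector_mult_scaleR ketbra_mult_vec
  by (simp add: vec_eq_iff scaleR_complex mult.assoc)

lemma braket_out_state:
  "braket x (out_state p w *v y) = (\<Sum>j\<in>UNIV. of_real (p j) * braket x (w j) * braket (w j) y)"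
  by (simp add: out_state_mult_vec braket_sum_right braket_scale_right mult_ac)

lemma braket_out_state_left:
  assumes "orthonormal_basis w"
  shows "braket (w k) (out_state p w *v y) = of_real (p k) * braket (w k) y"
proof -
  have "(\<Sum>j\<in>UNIV. of_real (p j) * braket (w k) (w j) * braket (w j) y)
      = (\<Sum>j\<in>UNIV. if j = k then of_real (p k) * braket (w k) y else 0)"
    using assms by (intro sum.cong) (auto simp: orthonormal_basis_def)
  thus ?thesis by (simp add: braket_out_state)
qed

lemma braket_out_state_right:
  assumes "orthonormal_basis w"
  shows "braket x (out_state p w *v w m) = of_real (p m) * braket x (w m)"
proof -
  have "(\<Sum>j\<in>UNIV. of_real (p j) * braket x (w j) * braket (w j) (w m))
      = (\<Sum>j\<in>UNIV. if j = m then of_real (p m) * braket x (w m) else 0)"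
    using assms by (intro sum.cong) (auto simp: orthonormal_basis_def)
  thus ?thesis by (simp add: braket_out_state)
qed

lemma braket_anticommutator_out_state:
  assumes ons: "orthonormal_basis w" and L_herm: "dagger L = L"
  shows "braket (w k) (((1/2) *\<^sub>R (out_state p w ** L + L ** out_state p w)) *v w m)
    = of_real ((p k + p m) / 2) * braket (w k) (L *v w m)"
proof -
  have "braket (w k) (((1/2) *\<^sub>R (out_state p w ** L + L ** out_state p w)) *v w m)
      = (1/2) *\<^sub>R (braket (w k) (out_state p w *v (L *v w m)) + braket (L *v w k) (out_state p w *v w m))"
    by (simp add: matrix_vector_mult_scaleR matrix_vector_mult_add_rdistrib braket_scaleR_right
        braket_add_right braket_hermitian[OF L_herm] flip: matrix_vector_mul_assoc)
  also have "\<dots> = (1/2) *\<^sub>R (of_real (p k) * braket (w k) (L *v w m) + of_real (p m) * braket (L *v w k) (w m))"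
    unfolding braket_out_state_left[OF ons] braket_out_state_right[OF ons] ..
  also have "\<dots> = of_real ((p k + p m) / 2) * braket (w k) (L *v w m)"
    by (simp add: braket_hermitian[OF L_herm] scaleR_complex algebra_simps)
  finally show ?thesis .
qed

lemma mtr_ketbra_mult: "mtr (ketbra x x ** X) = braket x (X *v x)"
proof -
  have "mtr (ketbra x x ** X) = (\<Sum>i\<in>UNIV. \<Sum>k\<in>UNIV. cnj (x $ k) * (X $ k $ i * x $ i))"
    by (simp add: mtr_def ketbra_def matrix_matrix_mult_def mult_ac)
  also have "\<dots> = (\<Sum>k\<in>UNIV. \<Sum>i\<in>UNIV. cnj (x $ k) * (X $ k $ i * x $ i))"
    by (rule sum.swap)
  also have "\<dots> = braket x (X *v x)"
    by (simp add: braket_def matrix_vector_mult_def sum_distrib_left)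
  finally show ?thesis .
qed

lemma mtr_sum_mult: "mtr ((\<Sum>k\<in>S. A k) ** X) = (\<Sum>k\<in>S. mtr (A k ** X))"
  by (simp add: mtr_def matrix_matrix_mult_def sum_distrib_right sum.swap[of _ S])

lemma mtr_scaleR_mult: "mtr ((r *\<^sub>R A) ** X) = of_real r * mtr (A ** X)"
  by (simp add: mtr_def matrix_matrix_mult_def scaleR_complex sum_distrib_left mult.assoc)

lemma mtr_out_state_mult:
  "mtr (out_state p w ** X) = (\<Sum>m\<in>UNIV. of_real (p m) * braket (w m) (X *v w m))"
  by (simp add: out_state_def mtr_sum_mult mtr_scaleR_mult mtr_ketbra_mult)

lemma mtr_sandwich_ketbra: "mtr (A ** ketbra \<psi> \<psi> ** dagger A) = braket (A *v \<psi>) (A *v \<psi>)"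
  by (simp add: mtr_def ketbra_def dagger_def braket_def matrix_matrix_mult_def matrix_vector_mult_def
      sum_distrib_left sum_distrib_right algebra_simps)

lemma sld_info_out_state:
  assumes "orthonormal_basis w" "dagger L = L"
  shows "sld_info (out_state p w) L = (\<Sum>m\<in>UNIV. \<Sum>k\<in>UNIV. p m * (cmod (braket (w k) (L *v w m)))\<^sup>2)"
proof -
  have "braket (w m) ((L ** L) *v w m) = of_real (\<Sum>k\<in>UNIV. (cmod (braket (w k) (L *v w m)))\<^sup>2)"
    for m
    using assms braket_self_parseval[of w "L *v w m"]
    by (simp add: braket_hermitian flip: matrix_vector_mul_assoc)
  thus ?thesis
    by (simp add: sld_info_def mtr_out_state_mult sum_distrib_left flip: of_real_mult of_real_sum)
qed

lemma C_Ups_ketbra: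
  assumes "orthonormal_basis w"
  shows "C_Ups dU (ketbra \<psi> \<psi>) = (\<Sum>m\<in>UNIV. \<Sum>k\<in>UNIV. 4 * (cmod (braket (w k) (dU m *v \<psi>)))\<^sup>2)"
  using braket_self_parseval[OF assms]
  by (simp add: C_Ups_def mtr_sandwich_ketbra sum_distrib_left flip: of_real_sum)

lemma has_vector_derivative_braket:
  assumes "(f has_vector_derivative f') (at t)" "(g has_vector_derivative g') (at t)"
  shows "((\<lambda>s. braket (f s) (g s)) has_vector_derivative (braket (f t) g' + braket f' (g t))) (at t)"
  using bounded_bilinear.has_vector_derivative[OF bounded_bilinear_braket assms] .

lemma has_vector_derivative_matrix_vector_mult:
  fixes U :: "real \<Rightarrow> complex^'n^'n"
  assumes "(U has_vector_derivative U') (at t)"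
  shows "((\<lambda>s. U s *v v) has_vector_derivative (U' *v v)) (at t)"
proof -
  have "bounded_linear (\<lambda>A::complex^'n^'n. A *v v)"
    unfolding linear_conv_bounded_linear[symmetric]
    by (rule linearI) (simp_all add: matrix_vector_mult_def vec_eq_iff sum.distrib algebra_simps
        scaleR_complex sum_distrib_left)
  from bounded_linear.has_vector_derivative[OF this assms] show ?thesis .
qed

lemma has_vector_derivative_braket_matrix:
  fixes U :: "real \<Rightarrow> complex^'n^'n"
  assumes "(U has_vector_derivative U') (at t)"
  shows "((\<lambda>s. braket x (U s *v y)) has_vector_derivative braket x (U' *v y)) (at t)"
  using has_vector_derivative_braket[OF has_vector_derivative_const
      has_vector_derivative_matrix_vector_mult[OF assms]] by simp

lemma has_vector_derivative_locally_constant: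
  assumes "(f has_vector_derivative f') (at t)" "open S" "t \<in> S" "\<And>s. s \<in> S \<Longrightarrow> f s = c"
  shows "f' = 0"
proof -
  have "(f has_vector_derivative 0) (at t)"
    by (rule has_vector_derivative_transform_within_open[OF _ assms(2,3)]) (simp_all add: assms(4))
  thus ?thesis using assms(1) vector_derivative_unique_at by blast
qed

lemma has_vector_derivative_locally_real:
  fixes f :: "real \<Rightarrow> complex"
  assumes "(f has_vector_derivative f') (at t)" "open S" "t \<in> S" "\<And>s. s \<in> S \<Longrightarrow> Im (f s) = 0"
  shows "Im f' = 0"
  using bounded_linear.has_vector_derivative[OF bounded_linear_Im assms(1)]
    has_vector_derivative_locally_constant assms(2-4) by blast

lemma double_sum_mono_eq_iff:
  fixes f g :: "'a \<Rightarrow> 'b \<Rightarrow> real"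
  assumes "finite A" "finite B" "\<And>i j. i \<in> A \<Longrightarrow> j \<in> B \<Longrightarrow> f i j \<le> g i j"
  shows "(\<Sum>i\<in>A. \<Sum>j\<in>B. f i j) \<le> (\<Sum>i\<in>A. \<Sum>j\<in>B. g i j)
    \<and> ((\<Sum>i\<in>A. \<Sum>j\<in>B. f i j) = (\<Sum>i\<in>A. \<Sum>j\<in>B. g i j) \<longleftrightarrow> (\<forall>i\<in>A. \<forall>j\<in>B. f i j = g i j))"
  unfolding sum.cartesian_product
  using assms sum_mono[of "A \<times> B" "case_prod f" "case_prod g"]
    sum_mono_inv[of "case_prod f" "A \<times> B" "case_prod g"]
  by (auto intro: sum.cong)

lemma sld_offdiagonal_bound:
  fixes pk pm x y :: real
  assumes "pk \<ge> 0" "pm \<ge> 0" "x \<ge> 0" "y \<ge> 0" "(pk + pm) / 2 * x = \<bar>pm - pk\<bar> * y"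
  shows "pm * x\<^sup>2 \<le> 4 * (pm * y\<^sup>2) \<and> (pm * x\<^sup>2 = 4 * (pm * y\<^sup>2) \<longleftrightarrow> (pk > 0 \<and> pm > 0 \<longrightarrow> y = 0))"
proof (cases "pm = 0")
  case False
  with assms have pm: "pm > 0" by simp
  have sx: "(pk + pm) * x = 2 * \<bar>pm - pk\<bar> * y"
    using assms(5) by (simp add: field_simps)
  have s: "pk + pm > 0" using assms(1) pm by simp
  have "(pk + pm) * x \<le> (pk + pm) * (2 * y)"
    unfolding sx using assms(1,4) pm by (simp add: mult_right_mono)
  moreover have "(pk + pm) * x < (pk + pm) * (2 * y)" if "pk > 0" "y > 0"
    unfolding sx using that pm by (simp add: mult_strict_right_mono)
  moreover have "x = 2 * y" if "pk = 0"
    using sx that pm by simp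
  ultimately have le: "x \<le> 2 * y" and lt: "pk > 0 \<Longrightarrow> y > 0 \<Longrightarrow> x < 2 * y"
    and eq: "pk = 0 \<Longrightarrow> x = 2 * y"
    using s by (simp_all add: mult_le_cancel_left_pos mult_less_cancel_left_pos)
  have "4 * (pm * y\<^sup>2) = pm * (2 * y)\<^sup>2"
    by (simp add: power2_eq_square)
  moreover have "pm * x\<^sup>2 \<le> pm * (2 * y)\<^sup>2"
    using le assms(3) pm by (intro mult_left_mono power_mono) auto
  moreover have "pm * x\<^sup>2 = pm * (2 * y)\<^sup>2 \<longleftrightarrow> x = 2 * y"
    using pm assms(3,4) power2_eq_iff_nonneg[of x "2 * y"] by simp
  moreover have "x = 2 * y \<longleftrightarrow> (pk > 0 \<and> pm > 0 \<longrightarrow> y = 0)"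
    using le lt eq assms(1,3,4) pm by (cases "pk = 0") force+
  ultimately show ?thesis by (simp only:)
qed simp

lemma sld_diagonal_bound:
  fixes p q x y z :: real
  assumes "p > 0" "p * x = \<bar>q\<bar>" "z = q\<^sup>2 / (4 * p) + p * y\<^sup>2"
  shows "p * x\<^sup>2 \<le> 4 * z \<and> (p * x\<^sup>2 = 4 * z \<longleftrightarrow> y = 0)"
proof -
  have "p * x\<^sup>2 = q\<^sup>2 / p"
    using assms(1) arg_cong[OF assms(2), of power2] by (simp add: field_simps power2_eq_square)
  moreover have "4 * z = q\<^sup>2 / p + 4 * p * y\<^sup>2"
    using assms(1,3) by (simp add: field_simps)
  ultimately show ?thesis using assms(1) by auto
qed

locale differentiable_orthonormal_basis =
  fixes S :: "real set" and \<theta> :: real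
    and w :: "real \<Rightarrow> 'n \<Rightarrow> complex ^ 'n" and dw :: "'n \<Rightarrow> complex ^ 'n"
  assumes open_S: "open S" and theta_in_S: "\<theta> \<in> S"
    and orthonormal: "\<And>t. t \<in> S \<Longrightarrow> orthonormal_basis (w t)"
    and w_deriv: "\<And>k. ((\<lambda>s. w s k) has_vector_derivative dw k) (at \<theta>)"
begin

lemma braket_w: "t \<in> S \<Longrightarrow> braket (w t j) (w t k) = (if j = k then 1 else 0)"
  using orthonormal by (simp add: orthonormal_basis_def)

lemma braket_deriv_antisym: "braket (dw j) (w \<theta> k) = - braket (w \<theta> j) (dw k)"
proof -
  have "braket (w \<theta> j) (dw k) + braket (dw j) (w \<theta> k) = 0"
    by (rule has_vector_derivative_locally_constant[OF
          has_vector_derivative_braket[OF w_deriv w_deriv] open_S theta_in_S])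
      (simp add: braket_w)
  thus ?thesis by (simp add: eq_neg_iff_add_eq_0 add.commute)
qed

lemma has_vector_derivative_out_state_element:
  assumes p_deriv: "\<And>j. ((\<lambda>s. p s j) has_real_derivative dp j) (at \<theta>)"
  shows "((\<lambda>s. braket (w \<theta> k) (out_state (p s) (w s) *v w \<theta> m)) has_vector_derivative
      (if k = m then of_real (dp m) else 0) + of_real (p \<theta> m - p \<theta> k) * braket (w \<theta> k) (dw m)) (at \<theta>)"
proof -
  have expand: "(\<lambda>s. braket (w \<theta> k) (out_state (p s) (w s) *v w \<theta> m))
      = (\<lambda>s. \<Sum>j\<in>UNIV. of_real (p s j) * (braket (w \<theta> k) (w s j) * braket (w s j) (w \<theta> m)))"
    by (simp add: fun_eq_iff braket_out_state mult.assoc)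
  have "((\<lambda>s. \<Sum>j\<in>UNIV. of_real (p s j) * (braket (w \<theta> k) (w s j) * braket (w s j) (w \<theta> m)))
      has_vector_derivative (\<Sum>j\<in>UNIV. of_real (p \<theta> j) *
        (braket (w \<theta> k) (w \<theta> j) * (braket (w \<theta> j) 0 + braket (dw j) (w \<theta> m)) +
         (braket (w \<theta> k) (dw j) + braket 0 (w \<theta> j)) * braket (w \<theta> j) (w \<theta> m)) +
        of_real (dp j) * (braket (w \<theta> k) (w \<theta> j) * braket (w \<theta> j) (w \<theta> m)))) (at \<theta>)"
    by (rule has_vector_derivative_sum, rule has_vector_derivative_mult[OF
          has_vector_derivative_of_real[OF p_deriv] has_vector_derivative_mult[OF
          has_vector_derivative_braket[OF has_vector_derivative_const w_deriv]
          has_vector_derivative_braket[OF w_deriv has_vector_derivative_const]]])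
  moreover have "(\<Sum>j\<in>UNIV. of_real (p \<theta> j) *
        (braket (w \<theta> k) (w \<theta> j) * (braket (w \<theta> j) 0 + braket (dw j) (w \<theta> m)) +
         (braket (w \<theta> k) (dw j) + braket 0 (w \<theta> j)) * braket (w \<theta> j) (w \<theta> m)) +
        of_real (dp j) * (braket (w \<theta> k) (w \<theta> j) * braket (w \<theta> j) (w \<theta> m)))
      = (\<Sum>j\<in>UNIV. (if j = k then of_real (p \<theta> k) * braket (dw k) (w \<theta> m) else 0)
          + (if j = m then of_real (p \<theta> m) * braket (w \<theta> k) (dw m) else 0)
          + (if j = k then (if k = m then of_real (dp m) else 0) else 0))"
    by (intro sum.cong) (auto simp: braket_w[OF theta_in_S] distrib_left)
  moreover have "\<dots> = of_real (p \<theta> k) * braket (dw k) (w \<theta> m) + of_real (p \<theta> m) * braket (w \<theta> k) (dw m)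
      + (if k = m then of_real (dp m) else 0)"
    by (simp only: sum.distrib sum.delta finite UNIV_I if_True)
  moreover have "\<dots> = (if k = m then of_real (dp m) else 0) + of_real (p \<theta> m - p \<theta> k) * braket (w \<theta> k) (dw m)"
    unfolding braket_deriv_antisym of_real_diff by (simp add: algebra_simps)
  ultimately show ?thesis
    unfolding expand by simp
qed

lemma sld_matrix_element:
  assumes p_deriv: "\<And>j. ((\<lambda>s. p s j) has_real_derivative dp j) (at \<theta>)"
    and L_herm: "dagger L = L"
    and L_sld: "((\<lambda>s. out_state (p s) (w s)) has_vector_derivative
                  (1/2) *\<^sub>R (out_state (p \<theta>) (w \<theta>) ** L + L ** out_state (p \<theta>) (w \<theta>))) (at \<theta>)"
  shows "of_real ((p \<theta> k + p \<theta> m) / 2) * braket (w \<theta> k) (L *v w \<theta> m)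
    = (if k = m then of_real (dp m) else 0) + of_real (p \<theta> m - p \<theta> k) * braket (w \<theta> k) (dw m)"
  using vector_derivative_unique_at[OF has_vector_derivative_braket_matrix[OF L_sld]
      has_vector_derivative_out_state_element[OF p_deriv]]
  by (simp add: braket_anticommutator_out_state[OF orthonormal[OF theta_in_S] L_herm])

end

locale differentiable_amplitudes = differentiable_orthonormal_basis +
  fixes p :: "real \<Rightarrow> 'n::finite \<Rightarrow> real"
    and v :: "real \<Rightarrow> 'n \<Rightarrow> complex ^ 'n" and dv :: "'n \<Rightarrow> complex ^ 'n"
  assumes p_nonneg: "\<And>t m. t \<in> S \<Longrightarrow> p t m \<ge> 0"
    and p_vanishing: "\<And>m. p \<theta> m = 0 \<Longrightarrow> \<forall>t\<in>S. p t m = 0"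
    and v_eq: "\<And>t m. t \<in> S \<Longrightarrow> v t m = of_real (sqrt (p t m)) *s w t m"
    and v_deriv: "\<And>m. ((\<lambda>s. v s m) has_vector_derivative dv m) (at \<theta>)"
begin

definition weight_deriv :: "'n \<Rightarrow> real" where
  "weight_deriv m = 2 * Re (braket (v \<theta> m) (dv m))"

lemma braket_v_self: "t \<in> S \<Longrightarrow> braket (v t m) (v t m) = of_real (p t m)"
  using p_nonneg[of t m]
  by (simp add: v_eq braket_scale_left braket_scale_right braket_w flip: of_real_mult)

lemma weight_has_real_derivative: "((\<lambda>s. p s m) has_real_derivative weight_deriv m) (at \<theta>)"
proof -
  have "braket (v \<theta> m) (dv m) + braket (dv m) (v \<theta> m) = of_real (weight_deriv m)"
    using cnj_braket[of "v \<theta> m" "dv m"] by (simp add: weight_deriv_def complex_eq_iff)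
  hence "((\<lambda>s. braket (v s m) (v s m)) has_vector_derivative of_real (weight_deriv m)) (at \<theta>)"
    using has_vector_derivative_braket[OF v_deriv[of m] v_deriv[of m]] by simp
  hence "((\<lambda>s. complex_of_real (p s m)) has_vector_derivative of_real (weight_deriv m)) (at \<theta>)"
    by (rule has_vector_derivative_transform_within_open[OF _ open_S theta_in_S])
      (simp add: braket_v_self)
  from bounded_linear.has_vector_derivative[OF bounded_linear_Re this]
  show ?thesis by (simp add: has_real_derivative_iff_has_vector_derivative)
qed

lemma dv_vanishing: "p \<theta> m = 0 \<Longrightarrow> dv m = 0"
  by (rule has_vector_derivative_locally_constant[OF v_deriv[of m] open_S theta_in_S, of 0])
    (simp add: v_eq p_vanishing)

lemma dv_offdiagonal:
  assumes "k \<noteq> m"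
  shows "braket (w \<theta> k) (dv m) = of_real (sqrt (p \<theta> m)) * braket (w \<theta> k) (dw m)"
proof -
  have "braket (w \<theta> k) (dv m) + braket (dw k) (v \<theta> m) = 0"
    by (rule has_vector_derivative_locally_constant[OF
          has_vector_derivative_braket[OF w_deriv v_deriv] open_S theta_in_S])
      (simp add: v_eq braket_scale_right braket_w assms)
  thus ?thesis
    by (simp add: v_eq[OF theta_in_S] braket_scale_right braket_deriv_antisym add_eq_0_iff2)
qed

lemma dv_diagonal:
  assumes "p \<theta> m > 0"
  shows "(cmod (braket (w \<theta> m) (dv m)))\<^sup>2
    = (weight_deriv m)\<^sup>2 / (4 * p \<theta> m) + p \<theta> m * (cmod (braket (w \<theta> m) (dw m)))\<^sup>2"
proof -
  define z where "z = braket (w \<theta> m) (dv m)"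
  define a where "a = braket (w \<theta> m) (dw m)"
  define r where "r = sqrt (p \<theta> m)"
  have r: "r > 0" "r * r = p \<theta> m"
    using assms by (simp_all add: r_def)
  have v\<theta>: "v \<theta> m = of_real r *s w \<theta> m"
    by (simp add: v_eq[OF theta_in_S] r_def)
  have "Im (braket (w \<theta> m) (dv m) + braket (dw m) (v \<theta> m)) = 0"
    by (rule has_vector_derivative_locally_real[OF
          has_vector_derivative_braket[OF w_deriv v_deriv] open_S theta_in_S])
      (simp add: v_eq braket_scale_right braket_w)
  hence im: "Im z = r * Im a"
    by (simp add: z_def a_def v\<theta> braket_scale_right braket_deriv_antisym)
  have re: "weight_deriv m = 2 * r * Re z"
    by (simp add: weight_deriv_def z_def v\<theta> braket_scale_left)
  have "cnj a = - a"
    using braket_deriv_antisym[of m m] by (simp add: a_def cnj_braket)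
  hence "Re a = 0" by (simp add: complex_eq_iff)
  hence "(cmod a)\<^sup>2 = (Im a)\<^sup>2" by (simp add: cmod_power2)
  moreover have "(cmod z)\<^sup>2 = (Re z)\<^sup>2 + (Im z)\<^sup>2" by (simp add: cmod_power2)
  ultimately show ?thesis
    unfolding z_def[symmetric] a_def[symmetric] re im r(2)[symmetric]
    using r(1) by (simp add: power2_eq_square field_simps)
qed

lemma sld_term_bound:
  assumes L_herm: "dagger L = L"
    and L_sld: "((\<lambda>s. out_state (p s) (w s)) has_vector_derivative
                  (1/2) *\<^sub>R (out_state (p \<theta>) (w \<theta>) ** L + L ** out_state (p \<theta>) (w \<theta>))) (at \<theta>)"
  shows "p \<theta> m * (cmod (braket (w \<theta> k) (L *v w \<theta> m)))\<^sup>2 \<le> 4 * (cmod (braket (w \<theta> k) (dv m)))\<^sup>2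
    \<and> (p \<theta> m * (cmod (braket (w \<theta> k) (L *v w \<theta> m)))\<^sup>2 = 4 * (cmod (braket (w \<theta> k) (dv m)))\<^sup>2
       \<longleftrightarrow> (p \<theta> k > 0 \<and> p \<theta> m > 0 \<longrightarrow> braket (dw k) (w \<theta> m) = 0))"
proof -
  define l where "l = braket (w \<theta> k) (L *v w \<theta> m)"
  define a where "a = braket (w \<theta> k) (dw m)"
  have nonneg: "p \<theta> k \<ge> 0" "p \<theta> m \<ge> 0"
    using p_nonneg theta_in_S by auto
  have elem: "of_real ((p \<theta> k + p \<theta> m) / 2) * l
      = (if k = m then of_real (weight_deriv m) else 0) + of_real (p \<theta> m - p \<theta> k) * a"
    unfolding l_def a_def by (rule sld_matrix_element[OF weight_has_real_derivative L_herm L_sld])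
  have cond: "braket (dw k) (w \<theta> m) = 0 \<longleftrightarrow> cmod a = 0"
    by (simp add: a_def braket_deriv_antisym)
  show ?thesis
  proof (cases "k = m")
    case False
    have "cmod (of_real ((p \<theta> k + p \<theta> m) / 2) * l) = cmod (of_real (p \<theta> m - p \<theta> k) * a)"
      using elem False by simp
    hence "(p \<theta> k + p \<theta> m) / 2 * cmod l = \<bar>p \<theta> m - p \<theta> k\<bar> * cmod a"
      unfolding norm_mult norm_of_real using nonneg by simp
    moreover have "(cmod (braket (w \<theta> k) (dv m)))\<^sup>2 = p \<theta> m * (cmod a)\<^sup>2"
      using nonneg by (simp add: dv_offdiagonal[OF False] a_def norm_mult power_mult_distrib)
    ultimately show ?thesis
      unfolding l_def[symmetric] cond
      using sld_offdiagonal_bound[OF nonneg, of "cmod l" "cmod a"] by simp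
  next
    case True
    show ?thesis
    proof (cases "p \<theta> m = 0")
      case True
      thus ?thesis using \<open>k = m\<close> by (simp add: dv_vanishing)
    next
      case False
      with nonneg have pos: "p \<theta> m > 0" by simp
      have "cmod (of_real (p \<theta> m) * l) = cmod (of_real (weight_deriv m))"
        using elem \<open>k = m\<close> by simp
      hence "p \<theta> m * cmod l = \<bar>weight_deriv m\<bar>"
        unfolding norm_mult norm_of_real using nonneg by simp
      from sld_diagonal_bound[OF pos this dv_diagonal[OF pos]]
      show ?thesis
        unfolding l_def[symmetric] cond using \<open>k = m\<close> pos by (simp add: a_def)
    qed
  qed
qed

end

theorem theorem2p3:
  fixes \<Theta> :: "real set"
    and psi0 :: "complex ^ 'n"
    and Ups dUps :: "real \<Rightarrow> 'n \<Rightarrow> complex ^ 'n ^ 'n"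
    and w dw :: "real \<Rightarrow> 'n \<Rightarrow> complex ^ 'n"
    and p :: "real \<Rightarrow> 'n \<Rightarrow> real"
  assumes Theta: "open \<Theta>" "is_interval \<Theta>" "\<Theta> \<noteq> {}"
    and psi0_norm: "braket psi0 psi0 = 1"
    and kraus_complete: "\<And>t. t \<in> \<Theta> \<Longrightarrow> (\<Sum>k\<in>UNIV. dagger (Ups t k) ** Ups t k) = mat 1"
    and canonical: "\<And>t j k. t \<in> \<Theta> \<Longrightarrow>
        mtr (Ups t k ** ketbra psi0 psi0 ** dagger (Ups t j)) = (if j = k then complex_of_real (p t k) else 0)"
    and Ups_psi0: "\<And>t k. t \<in> \<Theta> \<Longrightarrow> Ups t k *v psi0 = complex_of_real (sqrt (p t k)) *s w t k"
    and w_orthonormal: "\<And>t j k. t \<in> \<Theta> \<Longrightarrow> braket (w t j) (w t k) = (if j = k then 1 else 0)"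
    and Ups_deriv: "\<And>t k. t \<in> \<Theta> \<Longrightarrow> ((\<lambda>s. Ups s k) has_vector_derivative dUps t k) (at t)"
    and w_deriv: "\<And>t k. t \<in> \<Theta> \<Longrightarrow> ((\<lambda>s. w s k) has_vector_derivative dw t k) (at t)"
    and p_dichotomy: "\<And>k. (\<forall>t\<in>\<Theta>. p t k = 0) \<or> (\<forall>t\<in>\<Theta>. p t k > 0)"
    and theta: "\<theta> \<in> \<Theta>"
    and L_herm: "dagger L = L"
    and L_sld: "((\<lambda>s. out_state (p s) (w s)) has_vector_derivative
                  (1/2) *\<^sub>R (out_state (p \<theta>) (w \<theta>) ** L + L ** out_state (p \<theta>) (w \<theta>))) (at \<theta>)"
  shows "sld_info (out_state (p \<theta>) (w \<theta>)) L \<le> C_Ups (dUps \<theta>) (ketbra psi0 psi0)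
    \<and> (sld_info (out_state (p \<theta>) (w \<theta>)) L = C_Ups (dUps \<theta>) (ketbra psi0 psi0)
       \<longleftrightarrow> (\<forall>j k. p \<theta> j > 0 \<and> p \<theta> k > 0 \<longrightarrow> braket (dw \<theta> j) (w \<theta> k) = 0))"
proof -
  have p_nonneg: "p t k \<ge> 0" if "t \<in> \<Theta>" for t k
    using p_dichotomy[of k] that by (auto intro: less_imp_le)
  have p_vanishing: "\<forall>t\<in>\<Theta>. p t k = 0" if "p \<theta> k = 0" for k
    using p_dichotomy[of k] theta that by force
  interpret differentiable_amplitudes \<Theta> \<theta> w "dw \<theta>" p "\<lambda>s m. Ups s m *v psi0" "\<lambda>m. dUps \<theta> m *v psi0"
    using Theta(1) theta w_orthonormal w_deriv p_nonneg p_vanishing Ups_psi0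
      has_vector_derivative_matrix_vector_mult[OF Ups_deriv[OF theta]]
    by unfold_locales (auto simp: orthonormal_basis_def)
  have ons: "orthonormal_basis (w \<theta>)"
    by (rule orthonormal[OF theta])
  show ?thesis
    unfolding sld_info_out_state[OF ons L_herm] C_Ups_ketbra[OF ons]
    using double_sum_mono_eq_iff[OF finite finite,
        where f = "\<lambda>m k. p \<theta> m * (cmod (braket (w \<theta> k) (L *v w \<theta> m)))\<^sup>2"
          and g = "\<lambda>m k. 4 * (cmod (braket (w \<theta> k) (dUps \<theta> m *v psi0)))\<^sup>2"]
      sld_term_bound[OF L_herm L_sld]
    by auto
qed

end
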